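(* Let $P$ be a finite geometric lattice of rank $n$ with a fixed atom ordering, and let $S=\{s_1<\dots<s_r\}\subseteq\{1,\dots,n-1\}$. Then for every filling $F$ of the ribbon $\mathrm{Rib}(s_1,s_2-s_1,\dots,n-s_r)$ whose entries are the elements of a basis of the matroid of $P$ (that is, $n$ atoms whose join is $\hat1$), the alternating sum $\bar f_{chain}(v_F)$ of maximal chains of $P^S$ is a cycle: its boundary in the chain complex of the order complex of $P^S$ is $0$.
   Context: $P^S$ is the subposet of elements with ranks in $S$; its order complex has simplices the chains, oriented in increasing order, with boundary $d(u_1<\dots<u_k)=\sum_{i}(-1)^{i-1}(u_1<\dots<\widehat{u_i}<\dots<u_k)$. $\mathrm{Rib}(r_1,\dots,r_m)$ is the ribbon (connected skew shape with no $2\times2$ square) with rows of lengths $r_1,\dots,r_m$ from bottom to top, each row beginning directly above the last box of the row below. The reading word $(F_1,\dots,F_n)$ of a filling lists entries left to right in each row, rows bottom to top. The tabloid $\{F\}$ is $F$ modulo permutations of entries within rows; $v_F=\sum_{\sigma\in\mathrm{Col}_F}\mathrm{sgn}(\sigma)\{\sigma F\}$ where $\mathrm{Col}_F$ consists of permutations of the entries preserving each column. $\bar f_{chain}(\{F\})$ is the maximal chain $F_1\vee\dots\vee F_{s_1}<F_1\vee\dots\vee F_{s_2}<\dots<F_1\vee\dots\vee F_{s_r}$ of $P^S$, extended linearly. *)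

theory Defs
  imports "HOL-Combinatorics.Permutations"
begin

(* Lattice notions. A finite lattice is modelled as a type of class
   {finite, complete_lattice} (a finite nonempty lattice is complete). *)

definition covers :: "'a::order \<Rightarrow> 'a \<Rightarrow> bool" where
  "covers x y \<longleftrightarrow> x < y \<and> \<not> (\<exists>z. x < z \<and> z < y)"

definition atom :: "'a::complete_lattice \<Rightarrow> bool" where
  "atom a \<longleftrightarrow> covers bot a"

definition geometric_lattice :: "'a::{finite,complete_lattice} itself \<Rightarrow> bool" where
  "geometric_lattice _ \<longleftrightarrow>
     (\<forall>x::'a. x = Sup {a. atom a \<and> a \<le> x}) \<and>
     (\<forall>x y::'a. covers (inf x y) x \<longrightarrow> covers y (sup x y))"

definition lrank :: "'a::{finite,complete_lattice} \<Rightarrow> nat" where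
  "lrank x = Max {length xs | xs. sorted_wrt (<) xs \<and> (\<forall>y\<in>set xs. bot < y \<and> y \<le> x)}"

(* Ribbon Rib(s_1, s_2-s_1, ..., n-s_r), boxes indexed by reading-word position p = 1..n.
   Box p lies in row card{q\<in>S. q<p} (rows counted from the bottom, starting at 0)
   and in column p - card{q\<in>S. q<p}: each row starts directly above the last box
   of the previous row. *)
definition rib_col :: "nat set \<Rightarrow> nat \<Rightarrow> nat" where
  "rib_col S p = p - card {q\<in>S. q < p}"

definition col_perms :: "nat set \<Rightarrow> nat \<Rightarrow> (nat \<Rightarrow> nat) set" where
  "col_perms S n = {\<sigma>. \<sigma> permutes {1..n} \<and> (\<forall>p\<in>{1..n}. rib_col S (\<sigma> p) = rib_col S p)}"

(* f_chain of the tabloid of a filling G (G p = entry in box p):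
   the chain G_1 v...v G_{s_1} < ... < G_1 v...v G_{s_r}, as an increasing list *)
definition f_chain :: "nat set \<Rightarrow> (nat \<Rightarrow> 'a::complete_lattice) \<Rightarrow> 'a list" where
  "f_chain S G = map (\<lambda>k. Sup (G ` {1..k})) (sorted_list_of_set S)"

(* Chains of the free abelian group on simplices are represented as
   coefficient functions 'a list \<Rightarrow> int. *)
definition del_nth :: "nat \<Rightarrow> 'a list \<Rightarrow> 'a list" where
  "del_nth i xs = take i xs @ drop (Suc i) xs"

definition bd_simplex :: "'a list \<Rightarrow> 'a list \<Rightarrow> int" where
  "bd_simplex c = (\<lambda>c'. \<Sum>i<length c. (-1) ^ i * (if del_nth i c = c' then 1 else 0))"

definition f_chain_vF :: "nat set \<Rightarrow> nat \<Rightarrow> (nat \<Rightarrow> 'a::complete_lattice) \<Rightarrow> 'a list \<Rightarrow> int" where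
  "f_chain_vF S n F = (\<lambda>c. \<Sum>\<sigma>\<in>col_perms S n. sign \<sigma> * (if f_chain S (F \<circ> \<sigma>) = c then 1 else 0))"

definition bd_f_chain_vF :: "nat set \<Rightarrow> nat \<Rightarrow> (nat \<Rightarrow> 'a::complete_lattice) \<Rightarrow> 'a list \<Rightarrow> int" where
  "bd_f_chain_vF S n F = (\<lambda>c'. \<Sum>\<sigma>\<in>col_perms S n. sign \<sigma> * bd_simplex (f_chain S (F \<circ> \<sigma>)) c')"

end

theory Submission
  imports Defs
begin

(* Each face of a chain in the sum drops one join G_1 v ... v G_k with k in S.
   Boxes k and k+1 of the ribbon lie in the same column, because the row ending
   at box k is followed by a row starting directly above it. Composing with the
   transposition (k k+1) is therefore a sign-reversing involution of Col_F that
   leaves all other joins unchanged, and the face terms cancel in pairs. *)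

lemma sum_eq_0_if_sign_reversing_involution:
  fixes f :: "'b \<Rightarrow> 'c::linordered_ab_group_add"
  assumes "\<And>x. x \<in> A \<Longrightarrow> g x \<in> A" "\<And>x. x \<in> A \<Longrightarrow> g (g x) = x"
    and "\<And>x. x \<in> A \<Longrightarrow> f (g x) = - f x"
  shows "sum f A = 0"
proof -
  have "sum f A = sum (\<lambda>x. f (g x)) A"
    by (rule sum.reindex_bij_witness[where i = g and j = g]) (use assms in auto)
  also have "\<dots> = - sum f A"
    using assms(3) by (simp add: sum_negf)
  finally show ?thesis
    by (simp add: equal_neg_zero)
qed

lemma del_nth_map: "del_nth i (map f xs) = map f (del_nth i xs)"
  by (simp add: del_nth_def take_map drop_map)

lemma set_del_nth:
  assumes "distinct xs" "i < length xs"
  shows "set (del_nth i xs) = set xs - {xs ! i}"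
proof -
  have "xs = take i xs @ xs ! i # drop (Suc i) xs"
    using assms(2) by (simp add: id_take_nth_drop)
  then have "distinct (take i xs @ xs ! i # drop (Suc i) xs)"
    and "set xs = set (take i xs @ xs ! i # drop (Suc i) xs)"
    using assms(1) by metis+
  then show ?thesis
    by (auto simp: del_nth_def)
qed

lemma rib_col_Suc_of_mem:
  assumes "k \<in> S"
  shows "rib_col S (Suc k) = rib_col S k"
proof -
  have "{q\<in>S. q < Suc k} = insert k {q\<in>S. q < k}"
    using assms by auto
  then show ?thesis
    by (simp add: rib_col_def)
qed

lemma comp_transpose_in_col_perms:
  assumes "\<sigma> \<in> col_perms S n" "k \<in> S" "1 \<le> k" "k < n"
  shows "\<sigma> \<circ> transpose k (Suc k) \<in> col_perms S n"
proof -
  have \<tau>: "transpose k (Suc k) permutes {1..n}"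
    using assms(3,4) by (intro permutes_swap_id) auto
  have "rib_col S (transpose k (Suc k) p) = rib_col S p" for p
    using rib_col_Suc_of_mem[OF assms(2)] by (cases "p = k"; cases "p = Suc k") auto
  moreover have "transpose k (Suc k) p \<in> {1..n}" if "p \<in> {1..n}" for p
    using that by (simp only: permutes_in_image[OF \<tau>])
  ultimately show ?thesis
    using assms(1) \<tau> by (auto simp: col_perms_def permutes_compose)
qed

lemma del_nth_f_chain_comp_transpose:
  assumes "finite S" "i < card S" "sorted_list_of_set S ! i = k" "1 \<le> k"
  shows "del_nth i (f_chain S (G \<circ> transpose k (Suc k))) = del_nth i (f_chain S G)"
proof -
  let ?L = "sorted_list_of_set S"
  have "Sup ((G \<circ> transpose k (Suc k)) ` {1..k'}) = Sup (G ` {1..k'})"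
    if "k' \<in> set (del_nth i ?L)" for k'
  proof -
    have "k' \<noteq> k"
      using that assms(1-3) by (auto simp: set_del_nth)
    then have "transpose k (Suc k) ` {1..k'} = {1..k'}"
      using assms(4) by (intro transpose_image_eq) auto
    then show ?thesis
      by (simp only: image_comp[symmetric])
  qed
  then show ?thesis
    by (simp only: f_chain_def del_nth_map map_eq_conv) blast
qed

lemma sum_col_perms_face_eq_0:
  assumes "S \<subseteq> {1..n-1}" "i < card S"
  shows "(\<Sum>\<sigma>\<in>col_perms S n. sign \<sigma> * (if del_nth i (f_chain S (G \<circ> \<sigma>)) = c then 1 else 0)) = (0::int)"
proof -
  have fin: "finite S"
    using assms(1) finite_subset by auto
  define k where "k = sorted_list_of_set S ! i"
  have "k \<in> S"
    using assms(2) fin unfolding k_def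
    by (metis nth_mem set_sorted_list_of_set length_sorted_list_of_set)
  with assms(1) have k: "1 \<le> k" "k < n"
    by (auto dest!: subsetD)
  let ?\<tau> = "transpose k (Suc k)"
  have sign_comp: "sign (\<sigma> \<circ> ?\<tau>) = - sign \<sigma>" if "\<sigma> \<in> col_perms S n" for \<sigma>
  proof -
    have "permutation \<sigma>"
      using that by (auto simp: col_perms_def intro: permutes_imp_permutation)
    then show ?thesis
      using k by (simp add: sign_compose sign_swap_id permutation_swap_id)
  qed
  show ?thesis
  proof (rule sum_eq_0_if_sign_reversing_involution[where g = "\<lambda>\<sigma>. \<sigma> \<circ> ?\<tau>"])
    fix \<sigma> assume \<sigma>: "\<sigma> \<in> col_perms S n"
    show "\<sigma> \<circ> ?\<tau> \<in> col_perms S n"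
      using comp_transpose_in_col_perms[OF \<sigma> \<open>k \<in> S\<close> k] .
    show "\<sigma> \<circ> ?\<tau> \<circ> ?\<tau> = \<sigma>"
      by (simp add: comp_assoc)
    show "sign (\<sigma> \<circ> ?\<tau>) * (if del_nth i (f_chain S (G \<circ> (\<sigma> \<circ> ?\<tau>))) = c then 1 else 0)
        = - (sign \<sigma> * (if del_nth i (f_chain S (G \<circ> \<sigma>)) = c then 1 else 0))"
      using del_nth_f_chain_comp_transpose[OF fin assms(2) k_def[symmetric] k(1), of "G \<circ> \<sigma>"]
      by (simp add: sign_comp[OF \<sigma>] comp_assoc)
  qed
qed

lemma bd_f_chain_vF_eq_0:
  assumes "S \<subseteq> {1..n-1}"
  shows "bd_f_chain_vF S n F = (\<lambda>_. 0)"
proof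
  fix c
  let ?face = "\<lambda>i \<sigma>. sign \<sigma> * (if del_nth i (f_chain S (F \<circ> \<sigma>)) = c then 1 else 0)"
  have "bd_f_chain_vF S n F c = (\<Sum>\<sigma>\<in>col_perms S n. \<Sum>i<card S. (-1) ^ i * ?face i \<sigma>)"
    by (simp add: bd_f_chain_vF_def bd_simplex_def f_chain_def sum_distrib_left mult_ac)
  also have "\<dots> = (\<Sum>i<card S. (-1) ^ i * (\<Sum>\<sigma>\<in>col_perms S n. ?face i \<sigma>))"
    by (simp add: sum.swap[of _ "col_perms S n"] sum_distrib_left)
  also have "\<dots> = 0"
    by (simp add: sum_col_perms_face_eq_0[OF assms])
  finally show "bd_f_chain_vF S n F c = 0" .
qed

theorem proposition5p27:
  fixes S :: "nat set" and n :: nat and F :: "nat \<Rightarrow> 'a::{finite,complete_lattice}"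
  assumes "geometric_lattice TYPE('a)"
    and "lrank (top::'a) = n"
    and "S \<subseteq> {1..n-1}"
    and "inj_on F {1..n}"
    and "\<forall>p\<in>{1..n}. atom (F p)"
    and "Sup (F ` {1..n}) = top"
  shows "bd_f_chain_vF S n F = (\<lambda>_. 0)"
  using assms(3) by (rule bd_f_chain_vF_eq_0)

end
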